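(* Suppose that $\mathfrak{F}$ is a 2-recognizable formation and let $G$ be a finite group. If $\mathcal{I}_\mathfrak{F}(G)$ is a subgroup of $G$ and $G=\mathcal{I}_\mathfrak{F}(G)\langle g\rangle$ for some $g\in G$, then $G\in\mathfrak{F}$.
   Context: A formation is a class of finite groups closed under homomorphic images and subdirect products. $\mathfrak{F}$ is 2-recognizable if a finite group belongs to $\mathfrak{F}$ whenever all its 2-generated subgroups belong to $\mathfrak{F}$. $\mathcal{I}_\mathfrak{F}(G)$ is the set of $x\in G$ such that $\langle x,y\rangle\in\mathfrak{F}$ for all $y\in G$. *)

theory Defs
  imports "HOL-Algebra.Algebra"
begin

text \<open>A class of finite groups is represented (up to isomorphism) by a predicate on
groups whose carrier consists of natural numbers; every finite group is isomorphic
to such a group.\<close>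

definition in_class :: "(nat monoid \<Rightarrow> bool) \<Rightarrow> ('a, 'b) monoid_scheme \<Rightarrow> bool" where
  "in_class F G \<longleftrightarrow> group G \<and> finite (carrier G) \<and>
     (\<exists>H :: nat monoid. F H \<and> group H \<and> finite (carrier H) \<and> G \<cong> H)"

definition formation :: "(nat monoid \<Rightarrow> bool) \<Rightarrow> bool" where
  "formation F \<longleftrightarrow>
     (\<forall>(G :: nat monoid) (H :: nat monoid) h.
        in_class F G \<and> group H \<and> h \<in> hom G H \<and> h ` carrier G = carrier H
        \<longrightarrow> in_class F H) \<and>
     (\<forall>(G :: nat monoid) N1 N2.
        group G \<and> finite (carrier G) \<and> N1 \<lhd> G \<and> N2 \<lhd> G \<and> N1 \<inter> N2 = {\<one>\<^bsub>G\<^esub>} \<and>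
        in_class F (G Mod N1) \<and> in_class F (G Mod N2)
        \<longrightarrow> in_class F G)"

definition two_recognizable :: "(nat monoid \<Rightarrow> bool) \<Rightarrow> bool" where
  "two_recognizable F \<longleftrightarrow>
     (\<forall>G :: nat monoid. group G \<and> finite (carrier G) \<and>
        (\<forall>x\<in>carrier G. \<forall>y\<in>carrier G. in_class F (G\<lparr>carrier := generate G {x, y}\<rparr>))
        \<longrightarrow> in_class F G)"

definition I_F :: "(nat monoid \<Rightarrow> bool) \<Rightarrow> ('a, 'b) monoid_scheme \<Rightarrow> 'a set" where
  "I_F F G = {x \<in> carrier G. \<forall>y\<in>carrier G. in_class F (G\<lparr>carrier := generate G {x, y}\<rparr>)}"

end

theory Submission
  imports Defs
begin

text \<open>If \<open>y = a c\<close> with \<open>c \<in> \<langle>g\<rangle>\<close>, then \<open>\<langle>g, y\<rangle> = \<langle>g, a\<rangle>\<close>.  Writing any \<open>y\<close> in this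
way with \<open>a \<in> \<I>\<^sub>\<FF>(G)\<close> shows that \<open>\<langle>g, y\<rangle> \<in> \<FF>\<close> for all \<open>y\<close>, i.e. \<open>g \<in> \<I>\<^sub>\<FF>(G)\<close>.  As
\<open>\<I>\<^sub>\<FF>(G)\<close> is a subgroup, it then contains \<open>\<I>\<^sub>\<FF>(G)\<langle>g\<rangle> = G\<close>, so every 2-generated
subgroup of \<open>G\<close> lies in \<open>\<FF>\<close> and 2-recognizability gives \<open>G \<in> \<FF>\<close>.\<close>

lemma in_class_iso:
  assumes "in_class F G" "G \<cong> K" "group K"
  shows "in_class F K"
proof -
  from assms(1) obtain H :: "nat monoid" where H: "F H" "group H" "finite (carrier H)" "G \<cong> H"
    and G: "group G" "finite (carrier G)" unfolding in_class_def by blast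
  have "K \<cong> H" using group.iso_sym[OF G(1) assms(2)] H(4) iso_trans by blast
  moreover have "finite (carrier K)" using iso_finite[OF assms(2)] G(2) by simp
  ultimately show ?thesis using H assms(3) unfolding in_class_def by blast
qed

lemma finite_group_iso_nat_group:
  fixes G :: "('a, 'b) monoid_scheme"
  assumes "group G" "finite (carrier G)"
  obtains H :: "nat monoid" and \<phi> where "group H" "finite (carrier H)" "\<phi> \<in> iso G H"
proof -
  interpret group G by fact
  obtain f where "bij_betw f (carrier G) {0..<card (carrier G)}"
    using ex_bij_betw_finite_nat[OF assms(2)] by blast
  then have inj: "inj_on f (carrier G)" by (simp add: bij_betw_def)
  define h where "h = inv_into (carrier G) f"
  have hf: "\<And>x. x \<in> carrier G \<Longrightarrow> h (f x) = x" unfolding h_def using inj by simp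
  have hc: "\<And>y. y \<in> f ` carrier G \<Longrightarrow> h y \<in> carrier G"
    unfolding h_def by (simp add: inv_into_into)
  define H :: "nat monoid" where
    "H = \<lparr>carrier = f ` carrier G, monoid.mult = (\<lambda>x y. f (h x \<otimes>\<^bsub>G\<^esub> h y)), monoid.one = f \<one>\<^bsub>G\<^esub>\<rparr>"
  have iso: "f \<in> iso G H"
    unfolding iso_def hom_def H_def bij_betw_def using inj by (auto simp: hf)
  have fh: "\<And>y. y \<in> f ` carrier G \<Longrightarrow> f (h y) = y"
    unfolding h_def by (simp add: f_inv_into_f)
  have "monoid H"
  proof
    fix x y z assume x: "x \<in> carrier H" and y: "y \<in> carrier H" and z: "z \<in> carrier H"
    show "x \<otimes>\<^bsub>H\<^esub> y \<in> carrier H" using x y hc by (auto simp: H_def)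
    show "x \<otimes>\<^bsub>H\<^esub> y \<otimes>\<^bsub>H\<^esub> z = x \<otimes>\<^bsub>H\<^esub> (y \<otimes>\<^bsub>H\<^esub> z)"
      using x y z hc hf by (simp add: H_def m_assoc)
  next
    fix x assume x: "x \<in> carrier H"
    show "\<one>\<^bsub>H\<^esub> \<otimes>\<^bsub>H\<^esub> x = x" using x hc hf fh by (simp add: H_def)
    show "x \<otimes>\<^bsub>H\<^esub> \<one>\<^bsub>H\<^esub> = x" using x hc hf fh by (simp add: H_def)
  qed (simp add: H_def)
  then have "group H" by (rule iso_imp_group[OF is_isoI[OF iso]])
  moreover have "finite (carrier H)" using assms(2) by (simp add: H_def)
  ultimately show thesis using iso by (rule that)
qed

text \<open>2-recognizability is only required of groups on \<open>nat\<close>; it transfers to finite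
groups of any type through an isomorphic copy.\<close>

lemma two_recognizable_in_class:
  fixes G :: "('a, 'b) monoid_scheme"
  assumes "two_recognizable F" "group G" "finite (carrier G)"
    and pairs: "\<And>x y. x \<in> carrier G \<Longrightarrow> y \<in> carrier G \<Longrightarrow>
                  in_class F (G\<lparr>carrier := generate G {x, y}\<rparr>)"
  shows "in_class F G"
proof -
  interpret group G by fact
  obtain H :: "nat monoid" and \<phi> where H: "group H" "finite (carrier H)" "\<phi> \<in> iso G H"
    using finite_group_iso_nat_group[OF assms(2,3)] .
  interpret gh: group_hom G H \<phi>
    using H iso_imp_homomorphism[OF H(3)] assms(2)
    by (simp add: group_hom_def group_hom_axioms_def)
  have surj: "\<phi> ` carrier G = carrier H" using H(3) by (simp add: iso_def bij_betw_def)
  have "in_class F (H\<lparr>carrier := generate H {u, v}\<rparr>)"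
    if "u \<in> carrier H" "v \<in> carrier H" for u v
  proof -
    have "u \<in> \<phi> ` carrier G" "v \<in> \<phi> ` carrier G" using that surj by simp_all
    then obtain x y where xy: "x \<in> carrier G" "y \<in> carrier G" "u = \<phi> x" "v = \<phi> y"
      by (elim imageE) simp
    have sub: "subgroup (generate G {x, y}) G" using xy by (intro generate_is_subgroup) auto
    have gen: "generate H {u, v} = \<phi> ` generate G {x, y}"
      using gh.generate_img[of "{x, y}"] xy by simp
    have "G\<lparr>carrier := generate G {x, y}\<rparr> \<cong> H\<lparr>carrier := generate H {u, v}\<rparr>"
      using is_isoI[OF iso_restrict[OF H(3) assms(2) H(1) sub]] gen by simp
    moreover have "group (H\<lparr>carrier := generate H {u, v}\<rparr>)"
      using gen subgroup.subgroup_is_group[OF gh.subgroup_img_is_subgroup[OF sub] H(1)] by simp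
    ultimately show ?thesis using in_class_iso pairs xy by blast
  qed
  then have "in_class F H" using assms(1) H unfolding two_recognizable_def by blast
  moreover have "H \<cong> G" using iso_sym is_isoI[OF H(3)] by blast
  ultimately show ?thesis using in_class_iso assms(2) by blast
qed

lemma (in group) generate_pair_mult_cyclic:
  assumes "g \<in> carrier G" "a \<in> carrier G" "c \<in> generate G {g}"
  shows "generate G {g, a \<otimes> c} = generate G {g, a}"
proof -
  have c_carrier: "c \<in> carrier G" using assms generate_incl by blast
  have c_in: "c \<in> generate G {g, b}" for b
    using assms(3) mono_generate[of "{g}" "{g, b}"] by auto
  have ga: "subgroup (generate G {g, a}) G" using assms by (intro generate_is_subgroup) auto
  have gac: "subgroup (generate G {g, a \<otimes> c}) G"
    using assms c_carrier by (intro generate_is_subgroup) auto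
  have "{g, a \<otimes> c} \<subseteq> generate G {g, a}"
    using c_in subgroup.m_closed[OF ga] by (auto intro: generate.incl)
  then have "generate G {g, a \<otimes> c} \<subseteq> generate G {g, a}"
    using ga by (rule generate_subgroup_incl)
  moreover
  have "a \<otimes> c \<in> generate G {g, a \<otimes> c}" by (simp add: generate.incl)
  then have "a \<otimes> c \<otimes> inv c \<in> generate G {g, a \<otimes> c}"
    using c_in subgroup.m_closed[OF gac] subgroup.m_inv_closed[OF gac] by blast
  then have "a \<in> generate G {g, a \<otimes> c}" using assms(2) c_carrier by (simp add: m_assoc)
  then have "{g, a} \<subseteq> generate G {g, a \<otimes> c}" by (simp add: generate.incl)
  then have "generate G {g, a} \<subseteq> generate G {g, a \<otimes> c}"
    using gac by (rule generate_subgroup_incl)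
  ultimately show ?thesis by (rule subset_antisym)
qed

lemma generator_mem_I_F:
  assumes "group G" "g \<in> carrier G" "carrier G = I_F F G <#>\<^bsub>G\<^esub> generate G {g}"
  shows "g \<in> I_F F G"
proof -
  interpret group G by fact
  have "in_class F (G\<lparr>carrier := generate G {g, y}\<rparr>)" if y: "y \<in> carrier G" for y
  proof -
    obtain a c where ac: "a \<in> I_F F G" "c \<in> generate G {g}" "y = a \<otimes>\<^bsub>G\<^esub> c"
      using y assms(3) unfolding set_mult_def by blast
    then have "in_class F (G\<lparr>carrier := generate G {a, g}\<rparr>)"
      using assms(2) unfolding I_F_def by blast
    moreover have "generate G {g, y} = generate G {a, g}"
      using generate_pair_mult_cyclic[OF assms(2) _ ac(2)] ac(1,3)
      by (auto simp: I_F_def insert_commute)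
    ultimately show ?thesis by simp
  qed
  then show ?thesis using assms(2) unfolding I_F_def by blast
qed

lemma (in group) subgroup_mult_cyclic_eq_carrier:
  assumes "subgroup H G" "g \<in> H" "carrier G = H <#> generate G {g}"
  shows "H = carrier G"
proof -
  have "generate G {g} \<subseteq> H" using assms(1,2) generate_subgroup_incl by blast
  then have "carrier G \<subseteq> H"
    using assms(3) subgroup.m_closed[OF assms(1)] unfolding set_mult_def by auto
  then show ?thesis using subgroup.subset[OF assms(1)] by blast
qed

theorem lemma4p1:
  fixes F :: "nat monoid \<Rightarrow> bool" and G :: "'a monoid" and g :: 'a
  assumes "formation F" and "two_recognizable F"
    and "group G" and "finite (carrier G)"
    and "subgroup (I_F F G) G"
    and "g \<in> carrier G"
    and "carrier G = I_F F G <#>\<^bsub>G\<^esub> generate G {g}"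
  shows "in_class F G"
proof -
  have "g \<in> I_F F G" using generator_mem_I_F assms(3,6,7) .
  then have "I_F F G = carrier G"
    by (rule group.subgroup_mult_cyclic_eq_carrier[OF assms(3,5) _ assms(7)])
  then show ?thesis
    using two_recognizable_in_class[OF assms(2,3,4)] unfolding I_F_def by blast
qed

end
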